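(* Fix a tableau $\tau_{\bm{\lambda}}$ of shape $\bm{\lambda}\geq_{\textup{lex}}(n-2d,1^{2d})$, $\bm{\lambda}=(\lambda_1,\lambda_2,\dots)$. Then each of the following sets of polynomials has cardinality bounded by a quantity depending only on $d$ (independent of $n$): (i) the set of distinct polynomials $\textup{sym}_{\textup{hook}(\tau_{\bm{\lambda}})}(\mathsf{x}^m)$ with $\mathsf{x}^m$ ranging over square-free monomials of degree at most $d$; (ii) the set of polynomials $\mathsf{g}^{\Theta_{\tau_{\bm{\lambda}}}}_F$; (iii) the set of polynomials $\mathsf{d}^{\Theta_{\tau_{\bm{\lambda}}}}_F$; where in (ii) and (iii) $F$ ranges over $\mathcal{F}^{2d}_T$ and $T$ over intersection types with $|T|=n-\lambda_1$. (Each of these sets has span containing $W_{\tau_{\bm{\lambda}}}$.)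
   Context: Variables $\mathsf{x}_{ij}$, $1\le i<j\le n$ ($\mathsf{x}_{ji}:=\mathsf{x}_{ij}$); a square-free monomial is $\mathsf{x}^m=\prod_{i<j}\mathsf{x}_{ij}^{m_{ij}}$, $m_{ij}\in\{0,1\}$. $\mathfrak{S}_n$ acts by ring automorphisms with $\mathfrak{s}\cdot\mathsf{x}_{ij}=\mathsf{x}_{\mathfrak{s}(i)\mathfrak{s}(j)}$. $W_{\tau_{\bm{\lambda}}}$ is the subspace of the $\bm{\lambda}$-isotypic component of the $\mathfrak{S}_n$-module of square-free polynomials of degree at most $d$ (functions on $\{0,1\}^{\binom n2}$ of degree $\le d$) fixed by the row group of $\tau_{\bm{\lambda}}$. A tableau of shape $\bm{\lambda}$ is a bijective filling of the Young diagram by $1,\dots,n$; the row group $\mathfrak{R}_\tau$ is the subgroup of $\mathfrak{S}_n$ preserving each row's label set; $\textup{sym}_\tau(\mathsf{f}):=\frac{1}{|\mathfrak{R}_\tau|}\sum_{\mathfrak{s}\in\mathfrak{R}_\tau}\mathfrak{s}\cdot\mathsf{f}$. $\textup{hook}(\tau_{\bm{\lambda}})$ is the tableau of shape $(\lambda_1,1^{n-\lambda_1})$ with the same first row as $\tau_{\bm{\lambda}}$ and the remaining labels in the tail in increasing order. $\Theta_{\tau_{\bm{\lambda}}}\in\textup{Inj}([n-\lambda_1],[n])$ sends $i$ to the $i$-th smallest label not in the first row of $\tau_{\bm{\lambda}}$. $\geq_{\textup{lex}}$ is lexicographic order; $(n-2d,1^{2d})$ is the hook partition with first part $n-2d$ and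 $2d$ ones. Intersection type of size $t$: simple graph $T$ on $t$ vertices labeled bijectively by $[t]$. $T$-flag of size $f$: simple graph $F$ on $f$ vertices, $t$ labeled $1,\dots,t$ inducing a copy of $T$ with same labels; $\mathcal{F}^f_T$: such flags up to isomorphism. For $\Theta\in\textup{Inj}([t],[n])$, $\textup{Inj}_\Theta(V(F),[n])$ = injections $h:V(F)\to[n]$ with $h(v)=\Theta(i)$ for $v$ labeled $i$; $\mathsf{g}^\Theta_F:=\sum_{h\in\textup{Inj}_\Theta(V(F),[n])}\prod_{\{i,j\}\in E(F)}\mathsf{x}_{h(i)h(j)}$; $\mathsf{d}^\Theta_F:=\sum_{F'}(-1)^{|E(F')|-|E(F)|}\mathsf{g}^\Theta_{F'}$ over all simple graphs $F'$ on the same labeled vertex set as $F$ with $E(F')\supseteq E(F)$. *)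

theory Defs
  imports Complex_Main "HOL-Combinatorics.Permutations"
begin

text \<open>Vertices/labels are 1..n. The variable x_ij (i<j) is identified with the
2-set {i,j} (so x_ji = x_ij). A square-free monomial x^m is a set of such
2-sets. A square-free polynomial (real coefficients) is represented by its
coefficient function: monomial -> coefficient.\<close>

type_synonym edge = "nat set"
type_synonym monomial = "edge set"
type_synonym sqfpoly = "monomial \<Rightarrow> real"

definition edges_on :: "nat set \<Rightarrow> edge set" where
  "edges_on V = {e. \<exists>i\<in>V. \<exists>j\<in>V. i < j \<and> e = {i, j}}"

definition var_edges :: "nat \<Rightarrow> edge set" where
  "var_edges n = edges_on {1..n}"

definition mono :: "monomial \<Rightarrow> sqfpoly" where
  "mono M = (\<lambda>M'. if M' = M then 1 else 0)"

definition mon_img :: "(nat \<Rightarrow> nat) \<Rightarrow> monomial \<Rightarrow> monomial" where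
  "mon_img h M = (\<lambda>e. h ` e) ` M"

text \<open>action of a permutation s of {1..n} by ring automorphisms,
s . x_ij = x_{s(i)s(j)}; on coefficient functions this is (s.f)(M) = f(s^{-1} M).\<close>
definition act :: "(nat \<Rightarrow> nat) \<Rightarrow> sqfpoly \<Rightarrow> sqfpoly" where
  "act s f = (\<lambda>M. f (mon_img (inv s) M))"

definition is_partition :: "nat \<Rightarrow> nat list \<Rightarrow> bool" where
  "is_partition n lam \<longleftrightarrow> sorted_wrt (\<ge>) lam \<and> (\<forall>x\<in>set lam. 0 < x) \<and> sum_list lam = n"

text \<open>entries of a partition, padded with zeros (0-indexed)\<close>
definition pnth :: "nat list \<Rightarrow> nat \<Rightarrow> nat" where
  "pnth l i = (if i < length l then l ! i else 0)"

definition lex_ge :: "nat list \<Rightarrow> nat list \<Rightarrow> bool" where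
  "lex_ge l m \<longleftrightarrow> (\<forall>i. pnth l i = pnth m i) \<or>
     (\<exists>k. (\<forall>i<k. pnth l i = pnth m i) \<and> pnth m k < pnth l k)"

text \<open>A tableau is the list of its rows (each row a list of labels, left to right);
its shape is the list of row lengths.\<close>
definition shape :: "nat list list \<Rightarrow> nat list" where
  "shape tau = map length tau"

definition is_tableau :: "nat \<Rightarrow> nat list list \<Rightarrow> bool" where
  "is_tableau n tau \<longleftrightarrow> is_partition n (shape tau) \<and> distinct (concat tau)
      \<and> set (concat tau) = {1..n}"

definition row_group :: "nat \<Rightarrow> nat list list \<Rightarrow> (nat \<Rightarrow> nat) set" where
  "row_group n tau = {s. s permutes {1..n} \<and> (\<forall>r\<in>set tau. s ` set r = set r)}"

definition sym :: "nat \<Rightarrow> nat list list \<Rightarrow> sqfpoly \<Rightarrow> sqfpoly" where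
  "sym n tau f = (\<lambda>M. (1 / real (card (row_group n tau))) *
      (\<Sum>s\<in>row_group n tau. act s f M))"

definition tail_labels :: "nat \<Rightarrow> nat list list \<Rightarrow> nat list" where
  "tail_labels n tau = sorted_list_of_set ({1..n} - set (hd tau))"

definition hook :: "nat \<Rightarrow> nat list list \<Rightarrow> nat list list" where
  "hook n tau = hd tau # map (\<lambda>i. [i]) (tail_labels n tau)"

text \<open>Theta_tau : [n - lambda_1] -> [n], i |-> i-th smallest label not in the first row\<close>
definition Theta :: "nat \<Rightarrow> nat list list \<Rightarrow> nat \<Rightarrow> nat" where
  "Theta n tau i = tail_labels n tau ! (i - 1)"

definition simple_graph_on :: "nat set \<Rightarrow> edge set \<Rightarrow> bool" where
  "simple_graph_on V E \<longleftrightarrow> E \<subseteq> edges_on V"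

text \<open>Intersection type of size t: simple graph on [t] (vertex i labelled i).\<close>
definition int_type :: "nat \<Rightarrow> edge set \<Rightarrow> bool" where
  "int_type t T \<longleftrightarrow> simple_graph_on {1..t} T"

text \<open>T-flag of size f (representative of its isomorphism class): simple graph
on vertex set [f], where vertex i is labelled i for i \<le> t, and the labelled
vertices induce T with the same labels.\<close>
definition is_flag :: "nat \<Rightarrow> nat \<Rightarrow> edge set \<Rightarrow> edge set \<Rightarrow> bool" where
  "is_flag t f T F \<longleftrightarrow> t \<le> f \<and> simple_graph_on {1..f} F \<and> {e\<in>F. e \<subseteq> {1..t}} = T"

text \<open>Inj_Theta(V(F),[n]) (maps made extensional: value 0 outside V(F) = [f])\<close>
definition inj_Theta :: "nat \<Rightarrow> nat \<Rightarrow> nat \<Rightarrow> (nat \<Rightarrow> nat) \<Rightarrow> (nat \<Rightarrow> nat) set" where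
  "inj_Theta n t f Th = {h. inj_on h {1..f} \<and> h ` {1..f} \<subseteq> {1..n}
      \<and> (\<forall>i\<in>{1..t}. h i = Th i) \<and> (\<forall>v. v \<notin> {1..f} \<longrightarrow> h v = 0)}"

definition g_poly :: "nat \<Rightarrow> nat \<Rightarrow> nat \<Rightarrow> (nat \<Rightarrow> nat) \<Rightarrow> edge set \<Rightarrow> sqfpoly" where
  "g_poly n t f Th F = (\<lambda>M. \<Sum>h\<in>inj_Theta n t f Th. mono (mon_img h F) M)"

definition d_poly :: "nat \<Rightarrow> nat \<Rightarrow> nat \<Rightarrow> (nat \<Rightarrow> nat) \<Rightarrow> edge set \<Rightarrow> sqfpoly" where
  "d_poly n t f Th F = (\<lambda>M. \<Sum>F'\<in>{F'. F \<subseteq> F' \<and> simple_graph_on {1..f} F'}.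
      (-1) ^ (card F' - card F) * g_poly n t f Th F' M)"

definition set_sym :: "nat \<Rightarrow> nat \<Rightarrow> nat list list \<Rightarrow> sqfpoly set" where
  "set_sym n d tau = {sym n (hook n tau) (mono m) | m. m \<subseteq> var_edges n \<and> card m \<le> d}"

definition set_g :: "nat \<Rightarrow> nat \<Rightarrow> nat list list \<Rightarrow> sqfpoly set" where
  "set_g n d tau = (let t = n - length (hd tau) in
     {g_poly n t (2*d) (Theta n tau) F | T F. int_type t T \<and> is_flag t (2*d) T F})"

definition set_d :: "nat \<Rightarrow> nat \<Rightarrow> nat list list \<Rightarrow> sqfpoly set" where
  "set_d n d tau = (let t = n - length (hd tau) in
     {d_poly n t (2*d) (Theta n tau) F | T F. int_type t T \<and> is_flag t (2*d) T F})"

end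

theory Submission
  imports Defs
begin

text \<open>The polynomials g and d are indexed by graphs on the fixed vertex set [2d], so there are
at most 2^(2d choose 2) of each. For the symmetrisations over the hook tableau, note that its
row group contains every permutation of the first row (these fix the tail labels). A monomial
of degree at most d touches at most 2d labels, so such a permutation carries its first-row labels
into one fixed set C of at most 2d first-row labels without changing the symmetrisation. Thus
every symmetrised monomial is already the symmetrisation of a graph on C together with the tail,
and the shape condition bounds the tail by 2d labels.\<close>

lemma edges_on_eq: "edges_on V = {e. e \<subseteq> V \<and> card e = 2}"
proof -
  have "e \<in> edges_on V \<longleftrightarrow> e \<subseteq> V \<and> card e = 2" for e
  proof
    assume "e \<subseteq> V \<and> card e = 2"
    then obtain i j where ij: "e = {i, j}" "i \<noteq> j" "i \<in> V" "j \<in> V"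
      by (auto simp: card_2_iff)
    then have "e = {min i j, max i j}" "min i j < max i j"
      by (auto simp: min_def max_def)
    moreover have "min i j \<in> V" "max i j \<in> V"
      using ij by (simp_all add: min_def max_def)
    ultimately show "e \<in> edges_on V"
      unfolding edges_on_def by blast
  qed (auto simp: edges_on_def)
  then show ?thesis by blast
qed

lemma finite_edges_on: "finite V \<Longrightarrow> finite (edges_on V)"
  by (simp add: edges_on_eq)

lemma card_edges_on: "finite V \<Longrightarrow> card (edges_on V) = card V choose 2"
  by (simp add: edges_on_eq n_subsets)

lemma card_Union_edges_on_le:
  assumes "M \<subseteq> edges_on V" "finite M"
  shows "card (\<Union>M) \<le> 2 * card M"
proof -
  have "card (\<Union>M) \<le> (\<Sum>e\<in>M. card e)" by (rule card_Union_le_sum_card)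
  also have "\<dots> = 2 * card M"
    using assms(1) by (simp add: edges_on_eq subset_iff)
  finally show ?thesis .
qed

lemma finite_card_le_if_subset_image_Pow:
  assumes "finite E" "A \<subseteq> f ` Pow E"
  shows "finite A" "card A \<le> 2 ^ card E"
proof -
  show "finite A" using assms finite_subset by blast
  have "card A \<le> card (f ` Pow E)" using assms by (simp add: card_mono)
  also have "\<dots> \<le> card (Pow E)" using assms(1) by (simp add: card_image_le)
  finally show "card A \<le> 2 ^ card E" using assms(1) by (simp add: card_Pow)
qed

lemma card_subset_image_Pow_edges_on_le:
  assumes "finite S" "card S \<le> k" "A \<subseteq> f ` Pow (edges_on S)"
  shows "finite A \<and> card A \<le> 2 ^ (k choose 2)"
proof -
  have "card A \<le> 2 ^ (card S choose 2)"
    using finite_card_le_if_subset_image_Pow(2)[OF finite_edges_on assms(3)] assms(1)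
    by (simp add: card_edges_on)
  also have "\<dots> \<le> 2 ^ (k choose 2)"
    using assms(2) by (simp add: binomial_right_mono)
  finally show ?thesis
    using finite_card_le_if_subset_image_Pow(1)[OF finite_edges_on assms(3)] assms(1) by simp
qed

lemma mon_img_comp: "mon_img h (mon_img g M) = mon_img (h \<circ> g) M"
  by (simp add: mon_img_def image_comp)

lemma mon_img_id: "mon_img id M = M"
  by (simp add: mon_img_def)

lemma mon_img_subset_edges_on:
  assumes "M \<subseteq> edges_on V" "inj_on p (\<Union>M)" "p ` \<Union>M \<subseteq> S"
  shows "mon_img p M \<subseteq> edges_on S"
proof
  fix e' assume "e' \<in> mon_img p M"
  then obtain e where e: "e \<in> M" "e' = p ` e" by (auto simp: mon_img_def)
  have "inj_on p e" using assms(2) e(1) by (meson Union_upper inj_on_subset)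
  then have "card e' = 2" using assms(1) e by (auto simp: card_image edges_on_eq)
  moreover have "e' \<subseteq> S" using assms(3) e by blast
  ultimately show "e' \<in> edges_on S" by (simp add: edges_on_eq)
qed

lemma act_mono:
  assumes "bij s"
  shows "act s (mono M) = mono (mon_img s M)"
proof -
  have inv: "s \<circ> inv s = id" "inv s \<circ> s = id"
    using assms by (metis bij_is_surj surj_iff, metis bij_is_inj inj_iff)
  have "mon_img (inv s) M' = M \<longleftrightarrow> M' = mon_img s M" for M'
  proof
    assume "mon_img (inv s) M' = M"
    then have "mon_img s (mon_img (inv s) M') = mon_img s M" by simp
    then show "M' = mon_img s M" by (simp add: mon_img_comp inv mon_img_id)
  qed (simp add: mon_img_comp inv mon_img_id)
  then show ?thesis by (simp add: act_def mono_def)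
qed

lemma act_comp:
  assumes "bij s" "bij p"
  shows "act s (act p f) = act (s \<circ> p) f"
  by (simp add: act_def mon_img_comp o_inv_distrib[OF assms])

lemma row_group_comp:
  assumes "s \<in> row_group n tau" "p \<in> row_group n tau"
  shows "s \<circ> p \<in> row_group n tau"
proof -
  have "(s \<circ> p) ` set r = set r" if "r \<in> set tau" for r
    using assms that unfolding image_comp[symmetric] row_group_def by simp
  then show ?thesis
    using assms by (simp add: row_group_def permutes_compose)
qed

lemma row_group_inv:
  assumes "p \<in> row_group n tau"
  shows "inv p \<in> row_group n tau"
proof -
  have p: "p permutes {1..n}" using assms by (simp add: row_group_def)
  have "inv p ` set r = set r" if "p ` set r = set r" for r
    by (metis that image_inv_f_f permutes_inj[OF p])
  then show ?thesis using assms permutes_inv[OF p] by (simp add: row_group_def)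
qed

lemma sym_act:
  assumes p: "p \<in> row_group n tau"
  shows "sym n tau (act p f) = sym n tau f"
proof
  fix M
  let ?G = "row_group n tau"
  have bij: "bij s" if "s \<in> ?G" for s
    using that unfolding row_group_def by (blast intro: permutes_bij)
  have inv_p: "inv p \<in> ?G" using p by (rule row_group_inv)
  have "(\<Sum>s\<in>?G. act s (act p f) M) = (\<Sum>s\<in>?G. act s f M)"
  proof (rule sum.reindex_bij_witness[where j = "\<lambda>s. s \<circ> p" and i = "\<lambda>s. s \<circ> inv p"])
    have "p permutes {1..n}" using p by (simp add: row_group_def)
    then show "s \<circ> p \<circ> inv p = s" "s \<circ> inv p \<circ> p = s" for s :: "nat \<Rightarrow> nat"
      by (simp_all add: comp_assoc permutes_inv_o)
  qed (use p inv_p row_group_comp in \<open>auto simp: act_comp bij\<close>)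
  then show "sym n tau (act p f) M = sym n tau f M" by (simp add: sym_def)
qed

lemma sym_mono_mon_img:
  assumes "p \<in> row_group n tau"
  shows "sym n tau (mono (mon_img p M)) = sym n tau (mono M)"
proof -
  have "bij p" using assms unfolding row_group_def by (blast intro: permutes_bij)
  then show ?thesis using sym_act[OF assms, of "mono M"] act_mono[of p M] by simp
qed

lemma exists_permutes_image_subset:
  assumes "finite R" "A \<subseteq> R" "C \<subseteq> R" "card A \<le> card C"
  obtains p where "p permutes R" "p ` A \<subseteq> C"
proof -
  have fin: "finite A" "finite C" using assms finite_subset by blast+
  obtain C' where C': "C' \<subseteq> C" "card C' = card A"
    using obtain_subset_with_card_n[OF assms(4)] by auto
  obtain f where f: "bij_betw f A C'"
    using finite_same_card_bij[OF fin(1)] C' fin(2) finite_subset by metis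
  have "finite C'" using C'(1) fin(2) finite_subset by blast
  then have "card (R - A) = card (R - C')"
    using assms C' fin by (simp add: card_Diff_subset)
  then obtain g where g: "bij_betw g (R - A) (R - C')"
    using finite_same_card_bij assms(1) by blast
  define p where "p x = (if x \<in> A then f x else if x \<in> R then g x else x)" for x
  have "bij_betw p (A \<union> (R - A)) (C' \<union> (R - C'))"
  proof (rule bij_betw_combine)
    show "bij_betw p A C'" using f by (rule bij_betw_cong[THEN iffD1, rotated]) (simp add: p_def)
    show "bij_betw p (R - A) (R - C')" using g
      by (rule bij_betw_cong[THEN iffD1, rotated]) (simp add: p_def)
  qed blast
  moreover have "A \<union> (R - A) = R" "C' \<union> (R - C') = R" using assms C' by blast+
  ultimately have "p permutes R"
    using assms(2) by (intro bij_imp_permutes) (auto simp: p_def)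
  moreover have "p ` A \<subseteq> C" using f C' by (auto simp: p_def bij_betw_def)
  ultimately show ?thesis by (rule that)
qed

lemma permutes_first_row_in_row_group_hook:
  assumes "p permutes set (hd tau) \<inter> {1..n}"
  shows "p \<in> row_group n (hook n tau)"
proof -
  have "p ` set r = set r" if "r \<in> set (hook n tau)" for r
  proof -
    have "r = hd tau \<or> (\<exists>i. i \<notin> set (hd tau) \<and> r = [i])"
      using that by (auto simp: hook_def tail_labels_def)
    moreover have "p ` set (hd tau) = set (hd tau)"
      using permutes_subset[OF assms, of "set (hd tau)"] by (simp add: permutes_image)
    ultimately show ?thesis using assms by (auto simp: permutes_not_in)
  qed
  then show ?thesis
    using assms by (auto simp: row_group_def intro: permutes_subset)
qed

lemma set_sym_subset_image_Pow_edges_on: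
  obtains S where "finite S" "card S \<le> 2*d + card ({1..n} - set (hd tau))"
    "set_sym n d tau \<subseteq> (\<lambda>M. sym n (hook n tau) (mono M)) ` Pow (edges_on S)"
proof -
  define R where "R = set (hd tau) \<inter> {1..n}"
  define Tl where "Tl = {1..n} - set (hd tau)"
  obtain C where C: "C \<subseteq> R" "card C = min (2*d) (card R)"
    using obtain_subset_with_card_n[of "min (2*d) (card R)" R] by auto
  define S where "S = C \<union> Tl"
  have finite_S: "finite S" using C by (auto simp: S_def Tl_def R_def intro: finite_subset)
  have "card S \<le> 2*d + card Tl"
    using card_Un_le[of C Tl] C(2) by (simp add: S_def)
  moreover have "sym n (hook n tau) (mono M) \<in> (\<lambda>M. sym n (hook n tau) (mono M)) ` Pow (edges_on S)"
    if M: "M \<subseteq> var_edges n" "card M \<le> d" for M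
  proof -
    have finite_M: "finite M"
      using M(1) finite_edges_on[of "{1..n}"] by (auto simp: var_edges_def intro: finite_subset)
    have "card (\<Union>M) \<le> 2 * card M"
      using M(1) finite_M unfolding var_edges_def by (rule card_Union_edges_on_le)
    then have V: "\<Union>M \<subseteq> {1..n}" "card (\<Union>M) \<le> 2*d"
      using M by (auto simp: var_edges_def edges_on_eq)
    have "card (\<Union>M \<inter> R) \<le> card (\<Union>M)" "card (\<Union>M \<inter> R) \<le> card R"
      using V(1) finite_subset by (auto simp: R_def intro!: card_mono)
    then have "card (\<Union>M \<inter> R) \<le> card C"
      using V(2) C(2) by linarith
    then obtain p where p: "p permutes R" "p ` (\<Union>M \<inter> R) \<subseteq> C"
      using exists_permutes_image_subset[of R "\<Union>M \<inter> R" C] C(1) by (auto simp: R_def)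
    have "p ` \<Union>M \<subseteq> S"
    proof
      fix y assume "y \<in> p ` \<Union>M"
      then obtain x where x: "x \<in> \<Union>M" "y = p x" by blast
      show "y \<in> S"
      proof (cases "x \<in> R")
        case True then show ?thesis using x p(2) by (auto simp: S_def)
      next
        case False then show ?thesis
          using x V(1) permutes_not_in[OF p(1)] by (auto simp: S_def Tl_def R_def)
      qed
    qed
    then have "mon_img p M \<subseteq> edges_on S"
      using mon_img_subset_edges_on[OF M(1)[unfolded var_edges_def]]
        inj_on_subset[OF permutes_inj[OF p(1)] subset_UNIV] by blast
    moreover have "sym n (hook n tau) (mono (mon_img p M)) = sym n (hook n tau) (mono M)"
      using p(1) by (intro sym_mono_mon_img permutes_first_row_in_row_group_hook) (simp add: R_def)
    ultimately show ?thesis by (metis PowI image_eqI)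
  qed
  then have "set_sym n d tau \<subseteq> (\<lambda>M. sym n (hook n tau) (mono M)) ` Pow (edges_on S)"
    by (auto simp: set_sym_def)
  ultimately show ?thesis using finite_S that by (simp add: Tl_def)
qed

lemma set_g_subset_image_Pow_edges_on:
  "set_g n d tau \<subseteq>
     (\<lambda>F. g_poly n (n - length (hd tau)) (2*d) (Theta n tau) F) ` Pow (edges_on {1..2*d})"
  by (auto simp: set_g_def Let_def is_flag_def simple_graph_on_def)

lemma set_d_subset_image_Pow_edges_on:
  "set_d n d tau \<subseteq>
     (\<lambda>F. d_poly n (n - length (hd tau)) (2*d) (Theta n tau) F) ` Pow (edges_on {1..2*d})"
  by (auto simp: set_d_def Let_def is_flag_def simple_graph_on_def)

lemma lex_ge_imp_pnth_0_le:
  assumes "lex_ge l m"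
  shows "pnth m 0 \<le> pnth l 0"
  using assms unfolding lex_ge_def by (metis less_imp_le_nat neq0_conv order_refl)

lemma card_off_first_row_le:
  assumes "is_tableau n tau" "lex_ge (shape tau) ((n - k) # ys)"
  shows "card ({1..n} - set (hd tau)) \<le> k"
proof (cases "tau = []")
  case True
  then show ?thesis using assms(1) by (simp add: is_tableau_def)
next
  case False
  then have "set (hd tau) \<subseteq> {1..n}" "distinct (hd tau)"
    using assms(1) by (auto simp: is_tableau_def distinct_concat_iff)
  then have "card ({1..n} - set (hd tau)) = n - length (hd tau)"
    by (simp add: card_Diff_subset finite_subset distinct_card)
  moreover have "n - k \<le> length (hd tau)"
    using lex_ge_imp_pnth_0_le[OF assms(2)] False
    by (simp add: pnth_def shape_def hd_conv_nth)
  ultimately show ?thesis by simp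
qed

theorem proposition3p21:
  fixes d :: nat
  shows "\<exists>B::nat. \<forall>n tau. is_tableau n tau \<and>
            lex_ge (shape tau) ((n - 2*d) # replicate (2*d) 1) \<longrightarrow>
          (finite (set_sym n d tau) \<and> card (set_sym n d tau) \<le> B) \<and>
          (finite (set_g n d tau) \<and> card (set_g n d tau) \<le> B) \<and>
          (finite (set_d n d tau) \<and> card (set_d n d tau) \<le> B)"
proof -
  let ?B = "2 ^ (4*d choose 2) :: nat"
  have "(finite (set_sym n d tau) \<and> card (set_sym n d tau) \<le> ?B) \<and>
        (finite (set_g n d tau) \<and> card (set_g n d tau) \<le> ?B) \<and>
        (finite (set_d n d tau) \<and> card (set_d n d tau) \<le> ?B)"
    if "is_tableau n tau" "lex_ge (shape tau) ((n - 2*d) # replicate (2*d) 1)" for n tau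
  proof -
    have "card ({1..n} - set (hd tau)) \<le> 2*d"
      using that by (rule card_off_first_row_le)
    moreover obtain S where "finite S" "card S \<le> 2*d + card ({1..n} - set (hd tau))"
      "set_sym n d tau \<subseteq> (\<lambda>M. sym n (hook n tau) (mono M)) ` Pow (edges_on S)"
      by (rule set_sym_subset_image_Pow_edges_on)
    ultimately have "finite (set_sym n d tau) \<and> card (set_sym n d tau) \<le> ?B"
      using card_subset_image_Pow_edges_on_le[of S "4*d"] by simp
    moreover have "finite (set_g n d tau) \<and> card (set_g n d tau) \<le> ?B"
      by (rule card_subset_image_Pow_edges_on_le[OF _ _ set_g_subset_image_Pow_edges_on]) simp_all
    moreover have "finite (set_d n d tau) \<and> card (set_d n d tau) \<le> ?B"
      by (rule card_subset_image_Pow_edges_on_le[OF _ _ set_d_subset_image_Pow_edges_on]) simp_all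
    ultimately show ?thesis by blast
  qed
  then show ?thesis by blast
qed

end
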